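(* Let $G$ be a maximal $3$-$\gamma_{c}$-vertex critical graph of order $n$, with independence number $\alpha$ and clique number $\omega$. Then $\alpha\cdot\omega\leq\lfloor\frac{n-1}{2}\rfloor\cdot\lceil\frac{n-1}{2}\rceil$; moreover, $\alpha\cdot\omega=(\frac{n-1}{2})^{2}$ if and only if $G\in\mathcal{G}_{1}(l)$ for some $l\geq 2$.
   Context: All graphs are finite, simple and connected. A set $D\subseteq V(G)$ is a connected dominating set of $G$ if every vertex of $G$ is in $D$ or adjacent to a vertex of $D$, and $G[D]$ is connected; $\gamma_{c}(G)$ is the minimum cardinality of such a set. $G$ is $k$-$\gamma_{c}$-edge critical if $\gamma_{c}(G)=k$ and $\gamma_{c}(G+uv)<k$ for every pair of non-adjacent vertices $u,v$. A $2$-connected graph $G$ is $k$-$\gamma_{c}$-vertex critical if $\gamma_{c}(G)=k$ and $\gamma_{c}(G-v)<k$ for every $v\in V(G)$. $G$ is maximal $k$-$\gamma_{c}$-vertex critical if it is both $k$-$\gamma_{c}$-edge critical and $k$-$\gamma_{c}$-vertex critical. For $l\geq 2$, the class $\mathcal{G}_{1}(l)$ consists of the graphs on vertex set $\{v,q_{1},\dots,q_{l},z_{1},\dots,z_{l}\}$ whose edges are: $vz_{i}$ for all $i$; $q_{i}q_{j}$ for all $i\neq j$; and $z_{i}q_{j}$ for all $i\neq j$. *)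

theory Defs
  imports Complex_Main
begin

definition simple_graph :: "'a set \<Rightarrow> ('a \<Rightarrow> 'a \<Rightarrow> bool) \<Rightarrow> bool" where
  "simple_graph V E \<longleftrightarrow> finite V \<and> V \<noteq> {} \<and>
     (\<forall>u v. E u v \<longrightarrow> u \<in> V \<and> v \<in> V \<and> u \<noteq> v \<and> E v u)"

definition connected_set :: "('a \<Rightarrow> 'a \<Rightarrow> bool) \<Rightarrow> 'a set \<Rightarrow> bool" where
  "connected_set E S \<longleftrightarrow> S \<noteq> {} \<and>
     (\<forall>u\<in>S. \<forall>v\<in>S. (\<lambda>x y. x \<in> S \<and> y \<in> S \<and> E x y)\<^sup>*\<^sup>* u v)"

definition connected_graph :: "'a set \<Rightarrow> ('a \<Rightarrow> 'a \<Rightarrow> bool) \<Rightarrow> bool" where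
  "connected_graph V E \<longleftrightarrow> simple_graph V E \<and> connected_set E V"

definition del_vertex_edges :: "('a \<Rightarrow> 'a \<Rightarrow> bool) \<Rightarrow> 'a \<Rightarrow> ('a \<Rightarrow> 'a \<Rightarrow> bool)" where
  "del_vertex_edges E w = (\<lambda>x y. E x y \<and> x \<noteq> w \<and> y \<noteq> w)"

definition add_edge :: "('a \<Rightarrow> 'a \<Rightarrow> bool) \<Rightarrow> 'a \<Rightarrow> 'a \<Rightarrow> ('a \<Rightarrow> 'a \<Rightarrow> bool)" where
  "add_edge E u v = (\<lambda>x y. E x y \<or> (x = u \<and> y = v) \<or> (x = v \<and> y = u))"

definition dominating :: "'a set \<Rightarrow> ('a \<Rightarrow> 'a \<Rightarrow> bool) \<Rightarrow> 'a set \<Rightarrow> bool" where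
  "dominating V E D \<longleftrightarrow> D \<subseteq> V \<and> (\<forall>x\<in>V. x \<in> D \<or> (\<exists>d\<in>D. E x d))"

definition connected_dominating :: "'a set \<Rightarrow> ('a \<Rightarrow> 'a \<Rightarrow> bool) \<Rightarrow> 'a set \<Rightarrow> bool" where
  "connected_dominating V E D \<longleftrightarrow> dominating V E D \<and> connected_set E D"

definition gamma_c :: "'a set \<Rightarrow> ('a \<Rightarrow> 'a \<Rightarrow> bool) \<Rightarrow> nat" where
  "gamma_c V E = (LEAST k. \<exists>D. connected_dominating V E D \<and> card D = k)"

definition two_connected :: "'a set \<Rightarrow> ('a \<Rightarrow> 'a \<Rightarrow> bool) \<Rightarrow> bool" where
  "two_connected V E \<longleftrightarrow> connected_graph V E \<and> card V \<ge> 3 \<and>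
     (\<forall>w\<in>V. connected_graph (V - {w}) (del_vertex_edges E w))"

definition edge_critical :: "nat \<Rightarrow> 'a set \<Rightarrow> ('a \<Rightarrow> 'a \<Rightarrow> bool) \<Rightarrow> bool" where
  "edge_critical k V E \<longleftrightarrow> connected_graph V E \<and> gamma_c V E = k \<and>
     (\<forall>u\<in>V. \<forall>v\<in>V. u \<noteq> v \<and> \<not> E u v \<longrightarrow> gamma_c V (add_edge E u v) < k)"

definition vertex_critical :: "nat \<Rightarrow> 'a set \<Rightarrow> ('a \<Rightarrow> 'a \<Rightarrow> bool) \<Rightarrow> bool" where
  "vertex_critical k V E \<longleftrightarrow> two_connected V E \<and> gamma_c V E = k \<and>
     (\<forall>w\<in>V. gamma_c (V - {w}) (del_vertex_edges E w) < k)"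

definition maximal_vertex_critical :: "nat \<Rightarrow> 'a set \<Rightarrow> ('a \<Rightarrow> 'a \<Rightarrow> bool) \<Rightarrow> bool" where
  "maximal_vertex_critical k V E \<longleftrightarrow> edge_critical k V E \<and> vertex_critical k V E"

definition independent_set :: "'a set \<Rightarrow> ('a \<Rightarrow> 'a \<Rightarrow> bool) \<Rightarrow> 'a set \<Rightarrow> bool" where
  "independent_set V E S \<longleftrightarrow> S \<subseteq> V \<and> (\<forall>x\<in>S. \<forall>y\<in>S. \<not> E x y)"

definition clique :: "'a set \<Rightarrow> ('a \<Rightarrow> 'a \<Rightarrow> bool) \<Rightarrow> 'a set \<Rightarrow> bool" where
  "clique V E S \<longleftrightarrow> S \<subseteq> V \<and> (\<forall>x\<in>S. \<forall>y\<in>S. x \<noteq> y \<longrightarrow> E x y)"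

definition independence_number :: "'a set \<Rightarrow> ('a \<Rightarrow> 'a \<Rightarrow> bool) \<Rightarrow> nat" where
  "independence_number V E = Max {card S | S. independent_set V E S}"

definition clique_number :: "'a set \<Rightarrow> ('a \<Rightarrow> 'a \<Rightarrow> bool) \<Rightarrow> nat" where
  "clique_number V E = Max {card S | S. clique V E S}"

definition graph_iso :: "'a set \<Rightarrow> ('a \<Rightarrow> 'a \<Rightarrow> bool) \<Rightarrow> 'b set \<Rightarrow> ('b \<Rightarrow> 'b \<Rightarrow> bool) \<Rightarrow> bool" where
  "graph_iso V E V' E' \<longleftrightarrow> (\<exists>f. bij_betw f V V' \<and>
     (\<forall>x\<in>V. \<forall>y\<in>V. E x y \<longleftrightarrow> E' (f x) (f y)))"

datatype g1_vertex = Vtx | Q nat | Z nat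

definition G1_V :: "nat \<Rightarrow> g1_vertex set" where
  "G1_V l = {Vtx} \<union> Q ` {1..l} \<union> Z ` {1..l}"

fun G1_adj :: "g1_vertex \<Rightarrow> g1_vertex \<Rightarrow> bool" where
  "G1_adj Vtx (Z i) = True"
| "G1_adj (Z i) Vtx = True"
| "G1_adj (Q i) (Q j) = (i \<noteq> j)"
| "G1_adj (Z i) (Q j) = (i \<noteq> j)"
| "G1_adj (Q j) (Z i) = (i \<noteq> j)"
| "G1_adj _ _ = False"

definition G1_E :: "nat \<Rightarrow> g1_vertex \<Rightarrow> g1_vertex \<Rightarrow> bool" where
  "G1_E l x y \<longleftrightarrow> x \<in> G1_V l \<and> y \<in> G1_V l \<and> G1_adj x y"

definition in_G1 :: "nat \<Rightarrow> 'a set \<Rightarrow> ('a \<Rightarrow> 'a \<Rightarrow> bool) \<Rightarrow> bool" where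
  "in_G1 l V E \<longleftrightarrow> graph_iso V E (G1_V l) (G1_E l)"

end

theory Submission
  imports Defs
begin

text \<open>
  Since \<open>\<gamma>\<^sub>c(G) = 3\<close>, no vertex or edge {a, b} dominates G, whereas for every vertex w
  some vertex or edge {a, b} dominates G - w, and then w is adjacent to neither a nor b.
  Let I be an independent set and C a clique with at least two vertices each; they share at most
  one vertex. Applying the pairs of G - w to vertices w of C shows that some vertex lies outside
  I \<union> C if they are disjoint, and that two vertices, one adjacent and one non-adjacent to the
  common vertex c, lie outside if I \<inter> C = {c}. Hence \<open>\<alpha> + \<omega> + 1 \<le> n\<close>, and AM-GM gives the
  bound, with equality only if \<open>\<alpha> = \<omega> = (n - 1)/2\<close>.

  In the extremal case V is I \<union> C plus one or two vertices. With a single extra vertex r, the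
  pair of G - w for w \<in> C must be {r, x} where x is the only vertex of I not adjacent to w;
  this matches I with C and exhibits the structure of \<open>\<G>\<^sub>1(l)\<close>. Two extra vertices r, s
  either reduce to this case after exchanging c for r or s, or, using the edge-criticality of G
  for a non-edge between s and C, force C to be an edge while I has three vertices.
\<close>

section \<open>Connected domination\<close>

lemma simple_graphD:
  assumes "simple_graph V E"
  shows "finite V" "E x y \<Longrightarrow> E y x" "\<not> E x x"
  using assms unfolding simple_graph_def by auto

lemma dominating_pair_iff:
  "dominating V E {a, b} \<longleftrightarrow> a \<in> V \<and> b \<in> V \<and> (\<forall>x\<in>V. x = a \<or> x = b \<or> E x a \<or> E x b)"
  unfolding dominating_def by auto

lemma dominating_mono:
  assumes "dominating V E D" "\<And>x y. E x y \<Longrightarrow> E' x y"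
  shows "dominating V E' D"
  using assms unfolding dominating_def by blast

lemma connected_set_mono:
  assumes "connected_set E S" "\<And>x y. E x y \<Longrightarrow> E' x y"
  shows "connected_set E' S"
proof -
  have "(\<lambda>x y. x \<in> S \<and> y \<in> S \<and> E x y)\<^sup>*\<^sup>* u v \<Longrightarrow> (\<lambda>x y. x \<in> S \<and> y \<in> S \<and> E' x y)\<^sup>*\<^sup>* u v"
    for u v by (erule rtranclp.induct) (auto intro: rtranclp.rtrancl_into_rtrancl assms(2))
  then show ?thesis using assms(1) unfolding connected_set_def by blast
qed

lemma connected_set_pair_iff:
  assumes sym: "\<And>x y. E x y \<Longrightarrow> E y x" and irrefl: "\<And>x. \<not> E x x"
  shows "connected_set E {a, b} \<longleftrightarrow> a = b \<or> E a b"
proof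
  let ?R = "\<lambda>x y. x \<in> {a, b} \<and> y \<in> {a, b} \<and> E x y"
  assume "connected_set E {a, b}"
  then have "?R\<^sup>*\<^sup>* a b" unfolding connected_set_def by auto
  then show "a = b \<or> E a b"
    by (cases rule: converse_rtranclpE) (use irrefl in auto)
next
  let ?R = "\<lambda>x y. x \<in> {a, b} \<and> y \<in> {a, b} \<and> E x y"
  assume "a = b \<or> E a b"
  then have "?R\<^sup>*\<^sup>* a b" "?R\<^sup>*\<^sup>* b a" using sym by auto
  then show "connected_set E {a, b}" unfolding connected_set_def by auto
qed

lemma gamma_c_le_card:
  "connected_dominating V E D \<Longrightarrow> gamma_c V E \<le> card D"
  unfolding gamma_c_def by (rule Least_le) blast

lemma gamma_c_attained:
  assumes "connected_dominating V E D"
  obtains D' where "connected_dominating V E D'" "card D' = gamma_c V E"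
  using LeastI_ex[of "\<lambda>k. \<exists>D. connected_dominating V E D \<and> card D = k"] assms that
  unfolding gamma_c_def by blast

lemma gamma_c_less_3_imp_dominating_pair:
  assumes "finite V" "connected_set E V" "gamma_c V E < 3"
    and sym: "\<And>x y. E x y \<Longrightarrow> E y x" and irrefl: "\<And>x. \<not> E x x"
  obtains a b where "a = b \<or> E a b" "dominating V E {a, b}"
proof -
  have "connected_dominating V E V"
    using assms(2) unfolding connected_dominating_def dominating_def by simp
  then obtain D where D: "connected_dominating V E D" "card D < 3"
    using gamma_c_attained assms(3) by metis
  have "D \<subseteq> V" "D \<noteq> {}"
    using D(1) unfolding connected_dominating_def dominating_def connected_set_def by auto
  then have "finite D" using assms(1) finite_subset by blast
  have "card D = 1 \<or> card D = 2"
    using D(2) \<open>D \<noteq> {}\<close> \<open>finite D\<close> card_0_eq by fastforce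
  then obtain a b where "D = {a, b}"
    by (metis card_1_singletonE card_2_iff insert_absorb2)
  moreover from this have "a = b \<or> E a b"
    using D(1) connected_set_pair_iff[of E, OF sym irrefl] unfolding connected_dominating_def by blast
  ultimately show ?thesis using that D(1) unfolding connected_dominating_def by blast
qed

lemma add_edge_commute: "add_edge E u v = add_edge E v u"
  unfolding add_edge_def by (intro ext) auto

lemma add_edge_dominating_pair_at_endpoint:
  assumes "u \<noteq> v" "u = b \<or> add_edge E u v u b" "dominating V (add_edge E u v) {u, b}"
  shows "dominating V E {u, v} \<or> (\<exists>z. (z = u \<or> E u z) \<and> dominating (V - {v}) E {u, z})"
proof (cases "b = v")
  case True
  then show ?thesis using assms(3) unfolding dominating_pair_iff add_edge_def by auto
next
  case False
  then have "(b = u \<or> E u b) \<and> dominating (V - {v}) E {u, b}"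
    using assms unfolding dominating_pair_iff add_edge_def by auto
  then show ?thesis by blast
qed

lemma add_edge_dominating_pair:
  assumes sym: "\<And>x y. E x y \<Longrightarrow> E y x" and "u \<noteq> v"
    and ab: "a = b \<or> add_edge E u v a b" and dom: "dominating V (add_edge E u v) {a, b}"
  shows "(a = b \<or> E a b) \<and> dominating V E {a, b} \<or> dominating V E {u, v} \<or>
    (\<exists>z. (z = u \<or> E u z) \<and> dominating (V - {v}) E {u, z}) \<or>
    (\<exists>z. (z = v \<or> E v z) \<and> dominating (V - {u}) E {v, z})"
proof -
  have ba: "b = a \<or> add_edge E u v b a" using ab sym unfolding add_edge_def by auto
  have dom': "dominating V (add_edge E u v) {b, a}" using dom by (simp add: insert_commute)
  consider "a = u" | "b = u" | "a = v" | "b = v" | "a \<notin> {u, v}" "b \<notin> {u, v}" by blast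
  then show ?thesis
  proof cases
    case 1
    then show ?thesis using add_edge_dominating_pair_at_endpoint[OF \<open>u \<noteq> v\<close>] ab dom by blast
  next
    case 2
    then show ?thesis using add_edge_dominating_pair_at_endpoint[OF \<open>u \<noteq> v\<close>] ba dom' by blast
  next
    case 3
    then show ?thesis
      using add_edge_dominating_pair_at_endpoint[where u = v and v = u and b = b] \<open>u \<noteq> v\<close> ab dom
      by (auto simp: add_edge_commute insert_commute)
  next
    case 4
    then show ?thesis
      using add_edge_dominating_pair_at_endpoint[where u = v and v = u and b = a] \<open>u \<noteq> v\<close> ba dom'
      by (auto simp: add_edge_commute insert_commute)
  next
    case 5
    then show ?thesis using ab dom unfolding dominating_pair_iff add_edge_def by auto
  qed
qed

section \<open>Independent sets, cliques and the class \<open>\<G>\<^sub>1(l)\<close>\<close>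

lemma independent_setD: "independent_set V E I \<Longrightarrow> x \<in> I \<Longrightarrow> y \<in> I \<Longrightarrow> \<not> E x y"
  and independent_set_subset: "independent_set V E I \<Longrightarrow> I \<subseteq> V"
  unfolding independent_set_def by auto

lemma cliqueD: "clique V E C \<Longrightarrow> x \<in> C \<Longrightarrow> y \<in> C \<Longrightarrow> x \<noteq> y \<Longrightarrow> E x y"
  and clique_subset: "clique V E C \<Longrightarrow> C \<subseteq> V"
  unfolding clique_def by auto

lemma independent_clique_inter:
  assumes "independent_set V E I" "clique V E C"
  shows "I \<inter> C = {} \<or> (\<exists>c. I \<inter> C = {c})"
proof (cases "I \<inter> C = {}")
  case False
  then obtain c where "c \<in> I \<inter> C" by blast
  with assms have "I \<inter> C = {c}" by (auto dest: independent_setD cliqueD)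
  then show ?thesis by blast
qed simp

lemma two_le_card_imp_other:
  assumes "2 \<le> card A"
  obtains y where "y \<in> A" "y \<noteq> x"
proof -
  have "\<not> A \<subseteq> {x}" using assms card_mono[of "{x}" A] by auto
  then show ?thesis using that by blast
qed

lemma card_add_outside_le:
  assumes "finite V" "A \<subseteq> V" "T \<subseteq> V - A"
  shows "card A + card T \<le> card V"
    and "card A + card T = card V \<Longrightarrow> V = A \<union> T"
proof -
  have "finite A" "finite T" using assms finite_subset by blast+
  then have "card (A \<union> T) = card A + card T" using assms(3) by (intro card_Un_disjoint) auto
  moreover have "A \<union> T \<subseteq> V" using assms(2,3) by blast
  ultimately show "card A + card T \<le> card V" "card A + card T = card V \<Longrightarrow> V = A \<union> T"
    using card_mono[OF assms(1)] card_subset_eq[OF assms(1)] by metis+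
qed

lemma Max_card_subsets:
  assumes "finite V" "P {}" "\<And>S. P S \<Longrightarrow> S \<subseteq> V"
  shows Max_card_subsets_attained: "\<exists>S. P S \<and> card S = Max {card S | S. P S}"
    and Max_card_subsets_ge: "P S \<Longrightarrow> card S \<le> Max {card S | S. P S}"
proof -
  have "{card S | S. P S} \<subseteq> card ` Pow V" using assms(3) by auto
  then have fin: "finite {card S | S. P S}" using assms(1) by (simp add: finite_subset)
  moreover have "{card S | S. P S} \<noteq> {}" using assms(2) by blast
  ultimately show "\<exists>S. P S \<and> card S = Max {card S | S. P S}" using Max_in by fastforce
  show "P S \<Longrightarrow> card S \<le> Max {card S | S. P S}" using fin by (blast intro: Max_ge)
qed

lemma independence_number_attained:
  "finite V \<Longrightarrow> \<exists>I. independent_set V E I \<and> card I = independence_number V E"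
  unfolding independence_number_def
  by (rule Max_card_subsets_attained) (auto simp: independent_set_def)

lemma card_le_independence_number:
  "finite V \<Longrightarrow> independent_set V E I \<Longrightarrow> card I \<le> independence_number V E"
  unfolding independence_number_def
  by (rule Max_card_subsets_ge) (auto simp: independent_set_def)

lemma clique_number_attained:
  "finite V \<Longrightarrow> \<exists>C. clique V E C \<and> card C = clique_number V E"
  unfolding clique_number_def
  by (rule Max_card_subsets_attained) (auto simp: clique_def)

lemma card_le_clique_number:
  "finite V \<Longrightarrow> clique V E C \<Longrightarrow> card C \<le> clique_number V E"
  unfolding clique_number_def
  by (rule Max_card_subsets_ge) (auto simp: clique_def)

lemma G1_V_iff [simp]:
  "Vtx \<in> G1_V l" "Q i \<in> G1_V l \<longleftrightarrow> i \<in> {1..l}" "Z i \<in> G1_V l \<longleftrightarrow> i \<in> {1..l}"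
  unfolding G1_V_def by auto

lemma card_G1_V: "card (G1_V l) = 2 * l + 1"
proof -
  have "G1_V l = insert Vtx (Q ` {1..l} \<union> Z ` {1..l})" unfolding G1_V_def by auto
  moreover have "card (Q ` {1..l} \<union> Z ` {1..l}) = l + l"
    by (subst card_Un_disjoint) (auto simp: card_image inj_on_def)
  moreover have "Vtx \<notin> Q ` {1..l} \<union> Z ` {1..l}" by auto
  ultimately show ?thesis by simp
qed

lemma graph_iso_if_inverse:
  assumes h: "bij_betw h V' V" and E: "\<And>x y. x \<in> V' \<Longrightarrow> y \<in> V' \<Longrightarrow> E' x y \<longleftrightarrow> E (h x) (h y)"
  shows "graph_iso V E V' E'"
  unfolding graph_iso_def
proof (intro exI conjI ballI)
  let ?f = "inv_into V' h"
  show f: "bij_betw ?f V V'" using h by (rule bij_betw_inv_into)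
  fix x y assume "x \<in> V" "y \<in> V"
  then have "?f x \<in> V'" "?f y \<in> V'" "h (?f x) = x" "h (?f y) = y"
    using bij_betwE[OF f] bij_betw_inv_into_right[OF h] by auto
  then show "E x y \<longleftrightarrow> E' (?f x) (?f y)" using E by simp
qed

lemma in_G1I:
  assumes simple: "simple_graph V E"
    and V: "V = insert r (I \<union> C)" "r \<notin> I \<union> C" "I \<inter> C = {}"
    and I: "independent_set V E I" and C: "clique V E C" "finite C" "card C = l"
    and f: "bij_betw f C I"
    and r: "\<forall>x\<in>I. E r x" "\<forall>w\<in>C. \<not> E r w"
    and CI: "\<forall>w\<in>C. \<forall>x\<in>I. E w x \<longleftrightarrow> x \<noteq> f w"
  shows "in_G1 l V E"
proof -
  have sym: "E x y \<Longrightarrow> E y x" and irrefl: "\<not> E x x" for x y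
    using simple unfolding simple_graph_def by auto
  obtain g where g: "bij_betw g {1..l} C" using ex_bij_betw_nat_finite_1 C(2,3) by blast
  have fg: "bij_betw (f \<circ> g) {1..l} I" using bij_betw_trans[OF g f] .
  define h where "h v = (case v of Vtx \<Rightarrow> r | Q i \<Rightarrow> g i | Z i \<Rightarrow> f (g i))" for v
  have "bij_betw h (G1_V l) V"
  proof -
    have "h \<circ> Q = g" "h \<circ> Z = f \<circ> g" by (auto simp: h_def)
    moreover have "bij_betw Q {1..l} (Q ` {1..l})" "bij_betw Z {1..l} (Z ` {1..l})"
      by (auto intro: bij_betw_imageI inj_onI)
    ultimately have "bij_betw h (Q ` {1..l}) C" "bij_betw h (Z ` {1..l}) I"
      using g fg bij_betw_comp_iff by metis+
    moreover have "bij_betw h {Vtx} {r}" by (simp add: h_def)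
    ultimately have "bij_betw h ({Vtx} \<union> Q ` {1..l} \<union> Z ` {1..l}) ({r} \<union> C \<union> I)"
      using V(2,3) by (intro bij_betw_combine) auto
    then show ?thesis using V by (simp add: G1_V_def Un_commute Un_left_commute insert_commute)
  qed
  moreover have "G1_E l u v \<longleftrightarrow> E (h u) (h v)" if "u \<in> G1_V l" "v \<in> G1_V l" for u v
  proof -
    have "g i \<in> C" "f (g i) \<in> I" if "i \<in> {1..l}" for i
      using that g fg by (auto dest: bij_betwE)
    moreover have "g i = g j \<longleftrightarrow> i = j" "f (g i) = f (g j) \<longleftrightarrow> i = j"
      if "i \<in> {1..l}" "j \<in> {1..l}" for i j
      using that inj_on_eq_iff[OF bij_betw_imp_inj_on[OF g]] inj_on_eq_iff[OF bij_betw_imp_inj_on[OF fg]]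
      by auto
    moreover have "\<forall>x\<in>I. E x r" "\<forall>w\<in>C. \<not> E w r" "\<forall>w\<in>C. \<forall>x\<in>I. E x w \<longleftrightarrow> x \<noteq> f w"
      using r CI sym by blast+
    ultimately show ?thesis
      using that r CI irrefl cliqueD[OF C(1)] independent_setD[OF I]
      by (cases u; cases v) (auto simp: G1_E_def h_def)
  qed
  ultimately show ?thesis unfolding in_G1_def by (rule graph_iso_if_inverse)
qed

lemma in_G1_card_and_numbers:
  assumes "in_G1 l V E"
  shows "card V = 2 * l + 1" "l \<le> independence_number V E" "l \<le> clique_number V E"
proof -
  obtain f where f: "bij_betw f V (G1_V l)" and E: "\<forall>x\<in>V. \<forall>y\<in>V. E x y \<longleftrightarrow> G1_E l (f x) (f y)"
    using assms unfolding in_G1_def graph_iso_def by blast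
  let ?g = "inv_into V f"
  have g: "bij_betw ?g (G1_V l) V" using bij_betw_inv_into[OF f] .
  have E_g: "E (?g u) (?g v) \<longleftrightarrow> G1_E l u v" if "u \<in> G1_V l" "v \<in> G1_V l" for u v
    using that E bij_betwE[OF g] bij_betw_inv_into_right[OF f] by metis
  show "card V = 2 * l + 1" using bij_betw_same_card[OF f] card_G1_V by simp
  then have "finite V" using card.infinite by fastforce
  have card_g: "card (?g ` A) = l" if "A \<subseteq> G1_V l" "card A = l" for A
    using that card_image inj_on_subset[OF bij_betw_imp_inj_on[OF g]] by metis
  have "Z ` {1..l} \<subseteq> G1_V l" "Q ` {1..l} \<subseteq> G1_V l" by auto
  moreover have "card (Z ` {1..l}) = l" "card (Q ` {1..l}) = l" by (simp_all add: card_image inj_on_def)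
  moreover have "independent_set V E (?g ` Z ` {1..l})"
    using bij_betwE[OF g] E_g by (auto simp: independent_set_def G1_E_def)
  moreover have "clique V E (?g ` Q ` {1..l})"
    using bij_betwE[OF g] E_g by (auto simp: clique_def G1_E_def)
  ultimately show "l \<le> independence_number V E" "l \<le> clique_number V E"
    using card_le_independence_number card_le_clique_number \<open>finite V\<close> card_g by metis+
qed

section \<open>Maximal 3-\<open>\<gamma>\<^sub>c\<close>-vertex critical graphs\<close>

text \<open>Maximal 3-\<open>\<gamma>\<^sub>c\<close>-vertex criticality is used only through these consequences, where a
  connected dominating set of at most two vertices is written {a, b} with a = b or ab an edge:
  G has no such set, G - w has one, and so has G + uv for a non-edge uv, where it must contain
  u or v.\<close>

locale maximal_3_critical =
  fixes V :: "'a set" and E :: "'a \<Rightarrow> 'a \<Rightarrow> bool"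
  assumes connected: "connected_graph V E"
    and no_dominating_pair: "a = b \<or> E a b \<Longrightarrow> \<not> dominating V E {a, b}"
    and dominating_pair_minus_vertex:
      "w \<in> V \<Longrightarrow> \<exists>a b. (a = b \<or> E a b) \<and> dominating (V - {w}) E {a, b}"
    and dominating_pair_plus_edge: "u \<in> V \<Longrightarrow> v \<in> V \<Longrightarrow> u \<noteq> v \<Longrightarrow> \<not> E u v \<Longrightarrow>
      dominating V E {u, v} \<or>
      (\<exists>z. (z = u \<or> E u z) \<and> dominating (V - {v}) E {u, z}) \<or>
      (\<exists>z. (z = v \<or> E v z) \<and> dominating (V - {u}) E {v, z})"

lemma no_dominating_pair_if_gamma_c_3:
  assumes G: "simple_graph V E" and "gamma_c V E = 3" "a = b \<or> E a b"
  shows "\<not> dominating V E {a, b}"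
proof
  assume "dominating V E {a, b}"
  with assms have "connected_dominating V E {a, b}"
    using connected_set_pair_iff[of E, OF simple_graphD(2,3)[OF G]]
    unfolding connected_dominating_def by blast
  then have "gamma_c V E \<le> card {a, b}" by (rule gamma_c_le_card)
  also have "\<dots> \<le> 2" by (simp add: card_insert_le_m1)
  finally show False using assms(2) by simp
qed

lemma dominating_pair_minus_vertex_if_vertex_critical:
  assumes "vertex_critical 3 V E" "w \<in> V"
  shows "\<exists>a b. (a = b \<or> E a b) \<and> dominating (V - {w}) E {a, b}"
proof -
  let ?E = "del_vertex_edges E w"
  have G: "simple_graph (V - {w}) ?E" "connected_set ?E (V - {w})" "gamma_c (V - {w}) ?E < 3"
    using assms unfolding vertex_critical_def two_connected_def connected_graph_def by auto
  obtain a b where "a = b \<or> ?E a b" "dominating (V - {w}) ?E {a, b}"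
    using gamma_c_less_3_imp_dominating_pair[OF simple_graphD(1)[OF G(1)] G(2,3)]
      simple_graphD(2,3)[OF G(1)] by metis
  then show ?thesis by (metis dominating_mono del_vertex_edges_def)
qed

lemma dominating_pair_plus_edge_if_edge_critical:
  assumes "edge_critical 3 V E" "u \<in> V" "v \<in> V" "u \<noteq> v" "\<not> E u v"
  shows "dominating V E {u, v} \<or>
    (\<exists>z. (z = u \<or> E u z) \<and> dominating (V - {v}) E {u, z}) \<or>
    (\<exists>z. (z = v \<or> E v z) \<and> dominating (V - {u}) E {v, z})"
proof -
  let ?E = "add_edge E u v"
  have G: "simple_graph V E" "connected_set E V" "gamma_c V E = 3" and "gamma_c V ?E < 3"
    using assms unfolding edge_critical_def connected_graph_def by auto
  have "connected_set ?E V"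
    using G(2) by (rule connected_set_mono) (simp add: add_edge_def)
  moreover have "?E x y \<Longrightarrow> ?E y x" "\<not> ?E x x" for x y
    using simple_graphD(2,3)[OF G(1)] \<open>u \<noteq> v\<close> unfolding add_edge_def by auto
  ultimately obtain a b where "a = b \<or> ?E a b" "dominating V ?E {a, b}"
    using gamma_c_less_3_imp_dominating_pair[OF simple_graphD(1)[OF G(1)] _ \<open>gamma_c V ?E < 3\<close>]
    by metis
  from add_edge_dominating_pair[OF simple_graphD(2)[OF G(1)] \<open>u \<noteq> v\<close> this]
  show ?thesis using no_dominating_pair_if_gamma_c_3[OF G(1,3)] by blast
qed

lemma maximal_3_criticalI:
  assumes "connected_graph V E" "maximal_vertex_critical 3 V E"
  shows "maximal_3_critical V E"
proof
  have crit: "edge_critical 3 V E" "vertex_critical 3 V E"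
    using assms(2) unfolding maximal_vertex_critical_def by auto
  then have G: "simple_graph V E" "gamma_c V E = 3"
    unfolding edge_critical_def connected_graph_def by auto
  show "connected_graph V E" by (fact assms(1))
  show "\<not> dominating V E {a, b}" if "a = b \<or> E a b" for a b
    using no_dominating_pair_if_gamma_c_3[OF G that] .
  show "\<exists>a b. (a = b \<or> E a b) \<and> dominating (V - {w}) E {a, b}" if "w \<in> V" for w
    using dominating_pair_minus_vertex_if_vertex_critical[OF crit(2) that] .
  show "dominating V E {u, v} \<or>
      (\<exists>z. (z = u \<or> E u z) \<and> dominating (V - {v}) E {u, z}) \<or>
      (\<exists>z. (z = v \<or> E v z) \<and> dominating (V - {u}) E {v, z})"
    if "u \<in> V" "v \<in> V" "u \<noteq> v" "\<not> E u v" for u v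
    using dominating_pair_plus_edge_if_edge_critical[OF crit(1) that] .
qed

context maximal_3_critical
begin

lemma finite_V: "finite V"
  and E_sym: "E x y \<Longrightarrow> E y x"
  and E_irrefl: "\<not> E x x"
  and E_in_V: "E x y \<Longrightarrow> x \<in> V"
  and connected_V: "connected_set E V"
  using connected unfolding connected_graph_def simple_graph_def by auto

lemma finite_subset_V: "S \<subseteq> V \<Longrightarrow> finite S"
  using finite_V finite_subset by blast

lemma undominated_vertex:
  assumes "a \<in> V" "b \<in> V" "a = b \<or> E a b"
  obtains x where "x \<in> V" "x \<noteq> a" "x \<noteq> b" "\<not> E x a" "\<not> E x b"
  using no_dominating_pair[OF assms(3)] assms(1,2) unfolding dominating_pair_iff by blast

definition deletion_pair :: "'a \<Rightarrow> 'a \<Rightarrow> 'a \<Rightarrow> bool" where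
  "deletion_pair w a b \<longleftrightarrow> (a = b \<or> E a b) \<and> dominating (V - {w}) E {a, b}"

lemma deletion_pair_exists: "w \<in> V \<Longrightarrow> \<exists>a b. deletion_pair w a b"
  unfolding deletion_pair_def by (rule dominating_pair_minus_vertex)

lemma deletion_pair_commute: "deletion_pair w a b \<longleftrightarrow> deletion_pair w b a"
  unfolding deletion_pair_def by (auto simp: insert_commute E_sym)

lemma deletion_pairD:
  assumes "deletion_pair w a b" "w \<in> V"
  shows "a \<in> V" "b \<in> V" "a \<noteq> w" "b \<noteq> w" "a = b \<or> E a b" "\<not> E w a" "\<not> E w b"
    and "x \<in> V \<Longrightarrow> x \<noteq> w \<Longrightarrow> x = a \<or> x = b \<or> E x a \<or> E x b"
proof -
  have ab: "a = b \<or> E a b" and dom: "dominating (V - {w}) E {a, b}"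
    using assms(1) unfolding deletion_pair_def by auto
  then show "a \<in> V" "b \<in> V" "a \<noteq> w" "b \<noteq> w" "a = b \<or> E a b"
    and "x \<in> V \<Longrightarrow> x \<noteq> w \<Longrightarrow> x = a \<or> x = b \<or> E x a \<or> E x b"
    unfolding dominating_pair_iff by auto
  \<comment> \<open>a neighbour of w in the pair would make it dominate all of G\<close>
  show "\<not> E w a" "\<not> E w b"
    using no_dominating_pair[OF ab] dom assms(2) unfolding dominating_pair_iff by auto
qed

lemma deletion_pair_outside:
  assumes I: "independent_set V E I" "2 \<le> card I" and C: "clique V E C"
    and w: "w \<in> C" "w \<notin> I" and ab: "deletion_pair w a b"
  shows "\<exists>t\<in>{a, b}. t \<notin> I \<union> C"
proof (rule ccontr)
  assume "\<not> ?thesis"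
  have "w \<in> V" using clique_subset[OF C] w by auto
  note pair = deletion_pairD[OF ab this]
  have "a \<notin> C" "b \<notin> C" using cliqueD[OF C w(1)] pair(3,4,6,7) by auto
  with \<open>\<not> ?thesis\<close> have "a \<in> I" "b \<in> I" by auto
  with independent_setD[OF I(1)] pair(5) have "a = b" by blast
  obtain y where "y \<in> I" "y \<noteq> a" using two_le_card_imp_other I(2) by metis
  then have "y \<in> V" "y \<noteq> w" using independent_set_subset[OF I(1)] w(2) by auto
  then have "E y a" using pair(8) \<open>y \<noteq> a\<close> \<open>a = b\<close> by blast
  then show False using independent_setD[OF I(1) \<open>y \<in> I\<close> \<open>a \<in> I\<close>] by blast
qed

lemma deletion_pair_neighbour_outside:
  assumes I: "independent_set V E I" and C: "clique V E C" and IC: "I \<inter> C = {c}"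
    and w: "w \<in> C" "w \<noteq> c" and ab: "deletion_pair w a b"
  shows "\<exists>t\<in>{a, b}. t \<notin> I \<union> C \<and> E c t"
proof -
  have "c \<in> I" "c \<in> C" using IC by auto
  have "w \<in> V" "c \<in> V" using w \<open>c \<in> C\<close> clique_subset[OF C] by auto
  note pair = deletion_pairD[OF ab \<open>w \<in> V\<close>]
  have "E w c" using cliqueD[OF C w(1) \<open>c \<in> C\<close> w(2)] .
  then have "c \<noteq> a" "c \<noteq> b" using pair(6,7) by auto
  then have "E c a \<or> E c b" using pair(8)[OF \<open>c \<in> V\<close>] w(2) by auto
  moreover have "t \<notin> I \<union> C" if "E c t" "\<not> E w t" "t \<noteq> w" for t
  proof -
    have "t \<notin> I" using that(1) independent_setD[OF I \<open>c \<in> I\<close>] by blast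
    moreover have "t \<notin> C" using that(2,3) cliqueD[OF C w(1)] by auto
    ultimately show ?thesis by simp
  qed
  ultimately show ?thesis using pair(3,4,6,7) by blast
qed

lemma exists_non_neighbour_outside:
  assumes I: "independent_set V E I" and C: "clique V E C" and IC: "I \<inter> C = {c}"
    and w: "w \<in> C" "w \<noteq> c"
  shows "\<exists>s\<in>V. s \<notin> I \<union> C \<and> \<not> E s c"
proof (rule ccontr)
  assume all_adjacent: "\<not> ?thesis"
  have "c \<in> I" "c \<in> C" using IC by auto
  have "w \<in> V" "c \<in> V" using w \<open>c \<in> C\<close> clique_subset[OF C] by auto
  obtain a b where "deletion_pair c a b" using deletion_pair_exists[OF \<open>c \<in> V\<close>] by blast
  note pair = deletion_pairD[OF this \<open>c \<in> V\<close>]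
  have in_I: "t \<in> I" if "t \<in> V" "t \<noteq> c" "\<not> E c t" for t
  proof -
    have "t \<notin> C" using that(2,3) cliqueD[OF C \<open>c \<in> C\<close>] by auto
    moreover have "\<not> E t c" using that(3) E_sym by blast
    ultimately show ?thesis using all_adjacent that(1) by blast
  qed
  have "a \<in> I" "b \<in> I" using in_I pair(1-4,6,7) by auto
  then have "a = b" using pair(5) independent_setD[OF I] by blast
  have "w \<noteq> a" using \<open>a \<in> I\<close> w IC by auto
  then have "E w a" using pair(8)[OF \<open>w \<in> V\<close>] w(2) \<open>a = b\<close> by auto
  \<comment> \<open>the edge wa does not dominate G, and a vertex missed by it is missed by the pair of c\<close>
  then have "a = w \<or> E a w" using E_sym by blast
  then obtain x where x: "x \<in> V" "x \<noteq> a" "x \<noteq> w" "\<not> E x a" "\<not> E x w"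
    by (rule undominated_vertex[OF pair(1) \<open>w \<in> V\<close>])
  have "E c w" using cliqueD[OF C \<open>c \<in> C\<close> w(1)] w(2) by auto
  then have "x \<noteq> c" using x(5) by auto
  then show False using pair(8)[OF x(1)] x(2,4) \<open>a = b\<close> by auto
qed

lemma independent_clique_cases:
  assumes I: "independent_set V E I" "2 \<le> card I" and C: "clique V E C" "2 \<le> card C"
  obtains (disjoint) t where "I \<inter> C = {}" "t \<in> V - (I \<union> C)"
    | (meet) c r s where "I \<inter> C = {c}" "r \<in> V - (I \<union> C)" "s \<in> V - (I \<union> C)" "E r c" "\<not> E s c"
proof -
  from independent_clique_inter[OF I(1) C(1)] consider "I \<inter> C = {}" | c where "I \<inter> C = {c}"
    by blast
  then show ?thesis
  proof cases
    case 1
    obtain w where "w \<in> C" using two_le_card_imp_other C(2) by metis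
    then have "w \<in> V" "w \<notin> I" using 1 clique_subset[OF C(1)] by auto
    obtain a b where ab: "deletion_pair w a b" using deletion_pair_exists[OF \<open>w \<in> V\<close>] by blast
    from deletion_pair_outside[OF I C(1) \<open>w \<in> C\<close> \<open>w \<notin> I\<close> ab] deletion_pairD(1,2)[OF ab \<open>w \<in> V\<close>]
    show ?thesis using disjoint[OF 1] by blast
  next
    case (2 c)
    obtain w where w: "w \<in> C" "w \<noteq> c" using two_le_card_imp_other C(2) by metis
    then have "w \<in> V" using clique_subset[OF C(1)] by auto
    obtain a b where ab: "deletion_pair w a b" using deletion_pair_exists[OF \<open>w \<in> V\<close>] by blast
    from deletion_pair_neighbour_outside[OF I(1) C(1) 2 w ab] deletion_pairD(1,2)[OF ab \<open>w \<in> V\<close>]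
    obtain r where "r \<in> V - (I \<union> C)" "E r c" using E_sym by blast
    moreover obtain s where "s \<in> V - (I \<union> C)" "\<not> E s c"
      using exists_non_neighbour_outside[OF I(1) C(1) 2 w] by blast
    ultimately show ?thesis using meet[OF 2] by blast
  qed
qed

lemma card_independent_clique_bound:
  assumes I: "independent_set V E I" "2 \<le> card I" and C: "clique V E C" "2 \<le> card C"
  shows "card I + card C + 1 \<le> card V"
proof -
  have IC_V: "I \<union> C \<subseteq> V" using independent_set_subset[OF I(1)] clique_subset[OF C(1)] by blast
  then have sum: "card I + card C = card (I \<union> C) + card (I \<inter> C)"
    using card_Un_Int finite_subset_V by blast
  from I C show ?thesis
  proof (cases rule: independent_clique_cases)
    case (disjoint t)
    then show ?thesis using card_add_outside_le(1)[OF finite_V IC_V, of "{t}"] sum by simp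
  next
    case (meet c r s)
    then have "r \<noteq> s" by blast
    with meet show ?thesis using card_add_outside_le(1)[OF finite_V IC_V, of "{r, s}"] sum by simp
  qed
qed

lemma two_le_independence_number: "2 \<le> independence_number V E"
proof -
  obtain v where "v \<in> V" using connected unfolding connected_graph_def simple_graph_def by blast
  then obtain x where "x \<in> V" "x \<noteq> v" "\<not> E x v" using undominated_vertex by blast
  then have "independent_set V E {v, x}"
    using \<open>v \<in> V\<close> E_sym E_irrefl unfolding independent_set_def by auto
  then show ?thesis using card_le_independence_number[OF finite_V] \<open>x \<noteq> v\<close> by fastforce
qed

lemma two_le_clique_number: "2 \<le> clique_number V E"
proof -
  obtain u v where "u \<in> V" "v \<in> V" "u \<noteq> v"
    using independence_number_attained[OF finite_V] two_le_independence_number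
      two_le_card_imp_other independent_set_subset by (metis subsetD)
  then have "(\<lambda>x y. x \<in> V \<and> y \<in> V \<and> E x y)\<^sup>*\<^sup>* u v"
    using connected_V unfolding connected_set_def by blast
  then obtain y where "E u y" using \<open>u \<noteq> v\<close> by (cases rule: converse_rtranclpE) auto
  then have "clique V E {u, y}" "u \<noteq> y" using E_in_V E_sym E_irrefl unfolding clique_def by blast+
  then show ?thesis using card_le_clique_number[OF finite_V] by fastforce
qed

lemma independence_number_add_clique_number_le:
  "independence_number V E + clique_number V E + 1 \<le> card V"
  using independence_number_attained[OF finite_V] clique_number_attained[OF finite_V]
    card_independent_clique_bound two_le_independence_number two_le_clique_number by metis

end

section \<open>The arithmetic of the bound\<close>

lemma four_mult_le_square_add: "4 * (a * b) \<le> (a + b)^2" for a b :: nat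
proof -
  have "(int a + int b)^2 = (int a - int b)^2 + 4 * (int a * int b)"
    by (simp add: power2_eq_square algebra_simps)
  then have "int (4 * (a * b)) \<le> int ((a + b)^2)" by simp
  then show ?thesis by (simp only: of_nat_le_iff)
qed

lemma mult_le_floor_half_mult_ceiling_half:
  fixes a b m :: nat
  assumes "a + b \<le> m"
  shows "int (a * b) \<le> \<lfloor>real m / 2\<rfloor> * \<lceil>real m / 2\<rceil>"
proof -
  have "(a + b)^2 \<le> m^2" using assms by (simp add: power_mono)
  then have bound: "4 * (a * b) \<le> m^2" using four_mult_le_square_add[of a b] by linarith
  obtain k where "m = 2 * k \<or> m = 2 * k + 1" by (metis oddE evenE)
  then show ?thesis
  proof
    assume m: "m = 2 * k"
    then have "a * b \<le> k * k" using bound by (simp add: power2_eq_square)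
    moreover have "real m / 2 = real k" using m by simp
    ultimately show ?thesis by (simp flip: of_nat_mult)
  next
    assume m: "m = 2 * k + 1"
    then have "4 * (a * b) \<le> 4 * (k * k + k) + 1" using bound by (simp add: power2_eq_square algebra_simps)
    moreover have "4 * x \<le> 4 * y + 1 \<Longrightarrow> x \<le> y" for x y :: nat by presburger
    ultimately have "a * b \<le> k * k + k" by blast
    then have "int (a * b) \<le> int (k * k + k)" by (simp only: of_nat_le_iff)
    also have "\<dots> = int k * (int k + 1)" by (simp add: algebra_simps)
    finally have "int (a * b) \<le> int k * (int k + 1)" .
    moreover have "real m / 2 = real k + 1 / 2" using m by simp
    moreover have "\<lfloor>real k + 1 / 2\<rfloor> = int k" "\<lceil>real k + 1 / 2\<rceil> = int k + 1"
      by (simp_all add: floor_eq_iff ceiling_eq_iff)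
    ultimately show ?thesis by (simp only:)
  qed
qed

lemma mult_eq_square_half_imp:
  fixes a b m :: nat
  assumes "a + b \<le> m" and eq: "real (a * b) = (real m / 2)^2"
  shows "a = b \<and> m = 2 * a"
proof -
  have "real (4 * (a * b)) = real (m^2)" using eq by (simp add: power_divide)
  then have "4 * (a * b) = m^2" by (simp only: of_nat_eq_iff)
  moreover have "(a + b)^2 \<le> m^2" using assms(1) by (simp add: power_mono)
  ultimately have "(a + b)^2 = 4 * (a * b)" "a + b = m"
    using four_mult_le_square_add[of a b] power2_le_imp_le[of m "a + b"] by simp_all
  then have "(int a + int b)^2 = 4 * (int a * int b)"
    by (metis of_nat_add of_nat_mult of_nat_numeral of_nat_power)
  moreover have "(int a + int b)^2 = (int a - int b)^2 + 4 * (int a * int b)"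
    by (simp add: power2_eq_square algebra_simps)
  ultimately have "(int a - int b)^2 = 0" by simp
  then show ?thesis using \<open>a + b = m\<close> by simp
qed

section \<open>The extremal graphs\<close>

context maximal_3_critical
begin

context
  fixes I C :: "'a set" and r :: 'a
  assumes I: "independent_set V E I" "2 \<le> card I" and C: "clique V E C" "2 \<le> card C"
    and V: "V = insert r (I \<union> C)" "r \<notin> I \<union> C" "I \<inter> C = {}"
begin

lemma deletion_pair_through_apex:
  assumes w: "w \<in> C"
  obtains p where "deletion_pair w r p"
proof -
  have "w \<in> V" "w \<notin> I" using w V by auto
  obtain a b where ab: "deletion_pair w a b" using deletion_pair_exists[OF \<open>w \<in> V\<close>] by blast
  then obtain t where "t \<in> {a, b}" "t \<notin> I \<union> C"
    using deletion_pair_outside[OF I C(1) w \<open>w \<notin> I\<close>] by blast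
  moreover have "t \<in> V" using \<open>t \<in> {a, b}\<close> deletion_pairD(1,2)[OF ab \<open>w \<in> V\<close>] by blast
  ultimately have "t = r" using V(1) by blast
  then show ?thesis using ab \<open>t \<in> {a, b}\<close> deletion_pair_commute that by blast
qed

lemma apex_not_adjacent_clique: "w \<in> C \<Longrightarrow> \<not> E w r"
  using deletion_pair_through_apex deletion_pairD(6) V(1) by blast

text \<open>The pair of G - w for w \<in> C is {r, x} with x the only vertex of I not adjacent to w.\<close>

lemma non_neighbour_partner:
  assumes w: "w \<in> C"
  shows "\<exists>x. x \<in> I \<and> E r x \<and> \<not> E w x \<and> (\<forall>w'\<in>C. w' \<noteq> w \<longrightarrow> E w' x)"
proof -
  have C_V: "w' \<in> V" if "w' \<in> C" for w' using that V(1) by blast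
  obtain p where "deletion_pair w r p" using deletion_pair_through_apex[OF w] .
  note pair = deletion_pairD[OF this C_V[OF w]]
  have dominated: "E w' p" if "w' \<in> C" "w' \<noteq> w" "w' \<noteq> p" for w'
    using pair(8)[OF C_V[OF that(1)] that(2)] apex_not_adjacent_clique[OF that(1)] that(1,3) V(2)
    by blast
  obtain w' where "w' \<in> C" "w' \<noteq> w" using two_le_card_imp_other C(2) by metis
  then have "p \<noteq> r"
    using pair(8)[OF C_V[OF \<open>w' \<in> C\<close>]] apex_not_adjacent_clique V(2) by blast
  then have "E r p" using pair(5) by blast
  have "p \<notin> C" using cliqueD[OF C(1) w] pair(4,7) by blast
  then have "p \<in> I" using pair(2) V(1) \<open>p \<noteq> r\<close> by blast
  then have "\<forall>w'\<in>C. w' \<noteq> w \<longrightarrow> E w' p" using dominated V(3) by blast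
  then show ?thesis using \<open>p \<in> I\<close> \<open>E r p\<close> pair(7) by blast
qed

lemma single_outside_vertex_in_G1:
  assumes "card I = l" "card C = l"
  shows "in_G1 l V E"
proof -
  have "finite I" "finite C"
    using finite_subset_V independent_set_subset[OF I(1)] clique_subset[OF C(1)] by auto
  obtain f where f: "\<And>w. w \<in> C \<Longrightarrow>
      f w \<in> I \<and> E r (f w) \<and> \<not> E w (f w) \<and> (\<forall>w'\<in>C. w' \<noteq> w \<longrightarrow> E w' (f w))"
    using non_neighbour_partner by metis
  have "inj_on f C" by (rule inj_onI) (use f in metis)
  moreover have "f ` C = I"
    using f card_image[OF \<open>inj_on f C\<close>] assms \<open>finite I\<close> by (intro card_subset_eq) auto
  ultimately have "bij_betw f C I" by (simp add: bij_betw_def)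
  moreover have "\<forall>w\<in>C. \<forall>x\<in>I. E w x \<longleftrightarrow> x \<noteq> f w"
    using f \<open>f ` C = I\<close> by (metis imageE)
  moreover have "\<forall>x\<in>I. E r x" using f \<open>f ` C = I\<close> by auto
  moreover have "\<forall>w\<in>C. \<not> E r w" using apex_not_adjacent_clique E_sym by blast
  ultimately show ?thesis
    using in_G1I[OF _ V I(1) C(1) \<open>finite C\<close> assms(2)] connected
    unfolding connected_graph_def by blast
qed

end

context
  fixes I C :: "'a set" and c r s :: 'a
  assumes I: "independent_set V E I" and C: "clique V E C" and IC: "I \<inter> C = {c}"
    and V: "V = I \<union> C \<union> {r, s}" and outside: "r \<notin> I \<union> C" "s \<notin> I \<union> C"
    and r_c: "E r c" and s_c: "\<not> E s c"
begin

lemma c_mem: "c \<in> I" "c \<in> C" "c \<in> V"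
  using IC V by auto

lemma r_ne_s: "r \<noteq> s"
  using r_c s_c by blast

lemma clique_in_V: "w \<in> C \<Longrightarrow> w \<in> V"
  and rs_in_V: "r \<in> V" "s \<in> V"
  using V by blast+

lemma deletion_pair_contains_r:
  assumes w: "w \<in> C" "w \<noteq> c" and ab: "deletion_pair w a b"
  shows "a = r \<or> b = r"
proof -
  obtain t where t: "t \<in> {a, b}" "t \<notin> I \<union> C" "E c t"
    using deletion_pair_neighbour_outside[OF I C IC w ab] by blast
  have "t \<in> V" using t(1) deletion_pairD(1,2)[OF ab clique_in_V[OF w(1)]] by blast
  moreover have "t \<noteq> s" using t(3) s_c E_sym by blast
  ultimately show ?thesis using t(1,2) V by blast
qed

lemma deletion_pair_through_r:
  assumes w: "w \<in> C" "w \<noteq> c"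
  obtains p where "deletion_pair w r p"
proof -
  obtain a b where "deletion_pair w a b"
    using deletion_pair_exists[OF clique_in_V[OF w(1)]] by blast
  then show ?thesis
    using deletion_pair_contains_r[OF w] deletion_pair_commute that by metis
qed

lemma r_not_adjacent_clique: "w \<in> C \<Longrightarrow> w \<noteq> c \<Longrightarrow> \<not> E r w"
  using deletion_pair_through_r deletion_pairD(6) clique_in_V E_sym by metis

lemma outside_eq_r_or_s: "x \<in> V \<Longrightarrow> x \<notin> I \<Longrightarrow> x \<notin> C \<Longrightarrow> x = r \<or> x = s"
  using V by blast

lemma r_s_adjacent_if_dominating_from_s:
  assumes w0: "w0 \<in> C" "w0 \<noteq> c" and z: "z = s \<or> E s z" "dominating (V - {w0}) E {s, z}"
  shows "E r s"
proof -
  have "z \<in> V" and dom: "\<And>x. x \<in> V \<Longrightarrow> x \<noteq> w0 \<Longrightarrow> x = s \<or> x = z \<or> E x s \<or> E x z"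
    using z(2) unfolding dominating_pair_iff by auto
  have "c \<noteq> s" "\<not> E c s" "r \<noteq> w0" using outside c_mem s_c w0(1) E_sym by blast+
  then have "c \<noteq> z" using z(1) s_c E_sym by blast
  then have "E c z" using dom[OF c_mem(3)] c_mem(2) w0 \<open>c \<noteq> s\<close> \<open>\<not> E c s\<close> by blast
  then have "z \<noteq> s" "z \<notin> I" using \<open>\<not> E c s\<close> independent_setD[OF I c_mem(1)] by auto
  show ?thesis
  proof (cases "z = r")
    case True
    then show ?thesis using z(1) \<open>z \<noteq> s\<close> E_sym by blast
  next
    case False
    then have "\<not> E r z"
      using r_not_adjacent_clique \<open>E c z\<close> E_irrefl outside_eq_r_or_s[OF \<open>z \<in> V\<close> \<open>z \<notin> I\<close>] \<open>z \<noteq> s\<close> by blast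
    then show ?thesis using dom[OF rs_in_V(1) \<open>r \<noteq> w0\<close>] r_ne_s False by auto
  qed
qed

lemma r_s_adjacent_if_dominating_from_w0:
  assumes w0: "w0 \<in> C" "w0 \<noteq> c" "\<not> E s w0"
    and z: "z = w0 \<or> E w0 z" "dominating (V - {s}) E {w0, z}"
  shows "E r s"
proof -
  have "z \<in> V" and dom: "\<And>x. x \<in> V \<Longrightarrow> x \<noteq> s \<Longrightarrow> x = w0 \<or> x = z \<or> E x w0 \<or> E x z"
    using z(2) unfolding dominating_pair_iff by auto
  have "w0 \<in> V" "s \<noteq> w0" "r \<noteq> w0" using clique_in_V w0(1) outside by auto
  have "\<not> E r w0" "\<not> E w0 r" using r_not_adjacent_clique[OF w0(1,2)] E_sym by blast+
  then have "r \<noteq> z" using z(1) \<open>r \<noteq> w0\<close> by blast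
  then have "E r z" using dom[OF rs_in_V(1)] r_ne_s \<open>r \<noteq> w0\<close> \<open>\<not> E r w0\<close> by auto
  then have "E w0 z" using z(1) \<open>\<not> E r w0\<close> by blast
  obtain p where "deletion_pair w0 r p" using deletion_pair_through_r[OF w0(1,2)] by blast
  note pair = deletion_pairD[OF this \<open>w0 \<in> V\<close>]
  show ?thesis
  proof (cases "p = r \<or> p = s")
    case True
    then show ?thesis using pair(5) pair(8)[OF rs_in_V(2) \<open>s \<noteq> w0\<close>] r_ne_s E_sym by auto
  next
    case False
    \<comment> \<open>then p \<in> I, and z, a common neighbour of p and r, has nowhere to go\<close>
    have "p \<notin> C" using cliqueD[OF C w0(1)] pair(4,7) by blast
    then have "p \<in> I" using outside_eq_r_or_s[OF pair(2)] False by blast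
    have "p \<noteq> z" "\<not> E p w0" using \<open>E w0 z\<close> pair(7) E_sym by blast+
    then have "E p z" using dom[OF pair(2)] False pair(4) by blast
    then have "z \<notin> I" using independent_setD[OF I \<open>p \<in> I\<close>] by blast
    moreover have "z \<noteq> c" using \<open>E p z\<close> independent_setD[OF I \<open>p \<in> I\<close> c_mem(1)] by blast
    then have "z \<notin> C" using r_not_adjacent_clique \<open>E r z\<close> by blast
    moreover have "z \<noteq> r" "z \<noteq> s" using \<open>E r z\<close> \<open>E w0 z\<close> w0(3) E_irrefl E_sym by blast+
    ultimately show ?thesis using outside_eq_r_or_s[OF \<open>z \<in> V\<close>] by blast
  qed
qed

lemma r_s_adjacent:
  assumes w0: "w0 \<in> C" "w0 \<noteq> c" "\<not> E s w0"
  shows "E r s"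
proof -
  have "s \<noteq> w0" "r \<noteq> w0" "\<not> E r w0" using outside w0 r_not_adjacent_clique by blast+
  from dominating_pair_plus_edge[OF rs_in_V(2) clique_in_V[OF w0(1)] \<open>s \<noteq> w0\<close> w0(3)]
    r_s_adjacent_if_dominating_from_s[OF w0(1,2)] r_s_adjacent_if_dominating_from_w0[OF w0]
  show ?thesis
    using rs_in_V(1) r_ne_s \<open>r \<noteq> w0\<close> \<open>\<not> E r w0\<close> unfolding dominating_pair_iff by blast
qed

context
  assumes r_s: "E r s"
begin

lemma independent_non_neighbour_of_r:
  obtains y where "y \<in> I" "y \<noteq> c" "\<not> E r y"
proof -
  obtain y where y: "y \<in> V" "y \<noteq> r" "y \<noteq> c" "\<not> E y r" "\<not> E y c"
    using undominated_vertex[OF _ c_mem(3) disjI2[OF r_c]] V by blast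
  have "y \<notin> C" using cliqueD[OF C _ c_mem(2)] y(3,5) by blast
  moreover have "y \<noteq> s" using y(4) r_s E_sym by blast
  ultimately have "y \<in> I" using outside_eq_r_or_s[OF y(1)] y(2) by blast
  then show ?thesis using that y(3,4) E_sym by blast
qed

lemma deletion_pair_r_s:
  assumes w: "w \<in> C" "w \<noteq> c"
  shows "deletion_pair w r s"
proof -
  obtain p where "deletion_pair w r p" using deletion_pair_through_r[OF w] by blast
  note pair = deletion_pairD[OF this clique_in_V[OF w(1)]]
  obtain y where y: "y \<in> I" "y \<noteq> c" "\<not> E r y" by (rule independent_non_neighbour_of_r)
  have "y \<noteq> w" "y \<in> V" "y \<noteq> r" using y(1,2) IC w(1) V outside(1) by auto
  then have "y = p \<or> E y p" using pair(8)[of y] y(3) E_sym by blast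
  have "p = s"
  proof (rule ccontr)
    assume "p \<noteq> s"
    have "p \<noteq> r" using \<open>y = p \<or> E y p\<close> \<open>y \<noteq> r\<close> y(3) E_sym by blast
    then have "E r p" using pair(5) by blast
    then have "E y p" using \<open>y = p \<or> E y p\<close> y(3) by blast
    then have "p \<notin> I" "p \<noteq> c" using independent_setD[OF I y(1)] c_mem(1) by auto
    moreover have "p \<notin> C - {c}" using cliqueD[OF C w(1)] pair(4,7) by blast
    ultimately show False using outside_eq_r_or_s[OF pair(2)] \<open>p \<noteq> r\<close> \<open>p \<noteq> s\<close> by blast
  qed
  then show ?thesis using \<open>deletion_pair w r p\<close> by simp
qed

lemma clique_eq_pair:
  assumes w: "w \<in> C" "w \<noteq> c"
  shows "C = {c, w}"
proof -
  obtain x where x: "x \<in> V" "x \<noteq> r" "x \<noteq> s" "\<not> E x r" "\<not> E x s"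
    using undominated_vertex[OF _ _ disjI2[OF r_s]] V by blast
  \<comment> \<open>{r, s} dominates all vertices but w, and all but any other w' \<in> C - {c}, yet misses x\<close>
  have "x = w" using deletion_pairD(8)[OF deletion_pair_r_s[OF w] clique_in_V[OF w(1)] x(1)] x(2-5)
    by blast
  have "w' \<in> {c, w}" if "w' \<in> C" for w'
  proof (rule ccontr)
    assume "w' \<notin> {c, w}"
    then show False
      using deletion_pairD(8)[OF deletion_pair_r_s[OF that] clique_in_V[OF that] x(1)] x(2-5) \<open>x = w\<close>
      by auto
  qed
  then show ?thesis using w(1) c_mem(2) by blast
qed

end

lemma two_outside_vertices_unbalanced:
  assumes w0: "w0 \<in> C" "w0 \<noteq> c" "\<not> E s w0" and y0: "y0 \<in> I" "y0 \<noteq> c" "E r y0"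
  shows "card C < card I"
proof -
  have r_s: "E r s" using r_s_adjacent[OF w0] .
  obtain y where y: "y \<in> I" "y \<noteq> c" "\<not> E r y" using independent_non_neighbour_of_r[OF r_s] by blast
  have "y \<noteq> y0" using y(3) y0(3) by blast
  have "card C = 2" using clique_eq_pair[OF r_s w0(1,2)] w0(2) by simp
  moreover have "{c, y0, y} \<subseteq> I" using c_mem y y0 by auto
  moreover have "card {c, y0, y} = 3" using y y0 \<open>y \<noteq> y0\<close> by auto
  moreover have "finite I" using independent_set_subset[OF I] finite_subset_V by blast
  ultimately show ?thesis using card_mono[of I "{c, y0, y}"] by simp
qed

lemma balanced_two_outside_in_G1:
  assumes card_I: "card I = l" and card_C: "card C = l" and "2 \<le> l"
  shows "in_G1 l V E"
proof -
  have "finite I" "finite C"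
    using finite_subset_V independent_set_subset[OF I] clique_subset[OF C] by auto
  have "c \<in> I" "c \<in> C" using IC by auto
  consider (s_clique) "\<forall>w\<in>C. w \<noteq> c \<longrightarrow> E s w" | (r_independent) "\<forall>y\<in>I. y \<noteq> c \<longrightarrow> \<not> E r y"
    | (neither) w0 y0 where "w0 \<in> C" "w0 \<noteq> c" "\<not> E s w0" "y0 \<in> I" "y0 \<noteq> c" "E r y0"
    by blast
  then show ?thesis
  proof cases
    case s_clique
    let ?C = "insert s (C - {c})"
    have "clique V E ?C"
      using s_clique rs_in_V(2) clique_subset[OF C] cliqueD[OF C] E_sym
      unfolding clique_def by auto
    moreover have "card ?C = l" using card_C \<open>c \<in> C\<close> outside(2) \<open>finite C\<close> \<open>2 \<le> l\<close> by simp
    moreover have "V = insert r (I \<union> ?C)" "r \<notin> I \<union> ?C" "I \<inter> ?C = {}"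
      using V \<open>c \<in> I\<close> IC outside r_ne_s by auto
    ultimately show ?thesis
      using single_outside_vertex_in_G1[of I ?C r l] I card_I \<open>2 \<le> l\<close> by simp
  next
    case r_independent
    let ?I = "insert r (I - {c})"
    have "independent_set V E ?I"
      using r_independent rs_in_V(1) independent_set_subset[OF I] independent_setD[OF I] E_sym E_irrefl
      unfolding independent_set_def by auto
    moreover have "card ?I = l" using card_I \<open>c \<in> I\<close> outside(1) \<open>finite I\<close> \<open>2 \<le> l\<close> by simp
    moreover have "V = insert s (?I \<union> C)" "s \<notin> ?I \<union> C" "?I \<inter> C = {}"
      using V \<open>c \<in> C\<close> IC outside r_ne_s by auto
    ultimately show ?thesis
      using single_outside_vertex_in_G1[of ?I C s l] C card_C \<open>2 \<le> l\<close> by simp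
  next
    case neither
    have "card C < card I"
      by (rule two_outside_vertices_unbalanced[OF neither])
    then show ?thesis using card_I card_C by simp
  qed
qed

end

lemma extremal_in_G1:
  assumes I: "independent_set V E I" "card I = l" and C: "clique V E C" "card C = l"
    and "2 \<le> l" and n: "card V = 2 * l + 1"
  shows "in_G1 l V E"
proof -
  have IC_V: "I \<union> C \<subseteq> V" using independent_set_subset[OF I(1)] clique_subset[OF C(1)] by blast
  then have sum: "card I + card C = card (I \<union> C) + card (I \<inter> C)"
    using card_Un_Int finite_subset_V by blast
  have "2 \<le> card I" "2 \<le> card C" using I(2) C(2) \<open>2 \<le> l\<close> by simp_all
  from I(1) this(1) C(1) this(2) show ?thesis
  proof (cases rule: independent_clique_cases)
    case (disjoint t)
    then have "V = insert t (I \<union> C)"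
      using card_add_outside_le(2)[OF finite_V IC_V, of "{t}"] sum I(2) C(2) n by simp
    then show ?thesis using single_outside_vertex_in_G1 I C \<open>2 \<le> card I\<close> \<open>2 \<le> card C\<close> disjoint by blast
  next
    case (meet c r s)
    then have "r \<noteq> s" by blast
    with meet have "V = I \<union> C \<union> {r, s}"
      using card_add_outside_le(2)[OF finite_V IC_V, of "{r, s}"] sum I(2) C(2) n by simp
    with meet show ?thesis using balanced_two_outside_in_G1[OF I(1) C(1)] I(2) C(2) \<open>2 \<le> l\<close> by blast
  qed
qed

lemma in_G1_if_extremal_numbers:
  assumes "independence_number V E = l" "clique_number V E = l" "card V = 2 * l + 1"
  shows "in_G1 l V E"
  using independence_number_attained[OF finite_V] clique_number_attained[OF finite_V]
    extremal_in_G1 two_le_independence_number assms by metis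

end

theorem corollary3p7:
  fixes V :: "'a set" and E :: "'a \<Rightarrow> 'a \<Rightarrow> bool"
  assumes "connected_graph V E"
    and "maximal_vertex_critical 3 V E"
  defines "n \<equiv> card V"
    and "\<alpha> \<equiv> independence_number V E"
    and "\<omega> \<equiv> clique_number V E"
  shows "int (\<alpha> * \<omega>) \<le> \<lfloor>(real n - 1) / 2\<rfloor> * \<lceil>(real n - 1) / 2\<rceil> \<and>
         (real (\<alpha> * \<omega>) = ((real n - 1) / 2)^2 \<longleftrightarrow> (\<exists>l\<ge>2. in_G1 l V E))"
proof -
  interpret maximal_3_critical V E using assms(1,2) by (rule maximal_3_criticalI)
  have n_bound: "\<alpha> + \<omega> + 1 \<le> n"
    using independence_number_add_clique_number_le unfolding \<alpha>_def \<omega>_def n_def .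
  then have bound: "\<alpha> + \<omega> \<le> n - 1" and half: "(real n - 1) / 2 = real (n - 1) / 2"
    by (simp_all add: of_nat_diff)
  show ?thesis unfolding half
  proof (intro conjI iffI)
    show "int (\<alpha> * \<omega>) \<le> \<lfloor>real (n - 1) / 2\<rfloor> * \<lceil>real (n - 1) / 2\<rceil>"
      using mult_le_floor_half_mult_ceiling_half[OF bound] .
  next
    assume "real (\<alpha> * \<omega>) = (real (n - 1) / 2)^2"
    then have "\<alpha> = \<omega>" "n = 2 * \<alpha> + 1" using mult_eq_square_half_imp[OF bound] n_bound by auto
    then show "\<exists>l\<ge>2. in_G1 l V E"
      using in_G1_if_extremal_numbers two_le_independence_number unfolding \<alpha>_def \<omega>_def n_def by metis
  next
    assume "\<exists>l\<ge>2. in_G1 l V E"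
    then obtain l where "in_G1 l V E" by blast
    from in_G1_card_and_numbers[OF this] bound have "\<alpha> = l" "\<omega> = l" "n - 1 = 2 * l"
      unfolding \<alpha>_def \<omega>_def n_def by auto
    then show "real (\<alpha> * \<omega>) = (real (n - 1) / 2)^2" by (simp add: power2_eq_square)
  qed
qed

end
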